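(* Let $X$ be a topological space, let $S\subseteq X$ be an $\alpha$-scaffold and let $\mathcal A$ be a cover of $S_{[0]}$. Then either there is $A_S\in\mathcal A$ such that $\mathrm{cor}\,S\in\overline{A_S\cap S_{[0]}}$, or there exists a countable family $\mathcal A_S\subseteq[\mathcal A]^\omega$ such that every $\mathcal A'\subseteq\mathcal A$ with $|\mathcal A'\cap\mathcal A''|=\omega$ for every $\mathcal A''\in\mathcal A_S$ satisfies $\mathrm{cor}\,S\in\overline{\bigcup\{S_{[0]}\cap B: B\in\mathcal A'\}}$.
   Context: Scaffolds in a space $X$ are defined by recursion. A pair $(S,\mathcal S)$ with $S\subseteq X$, $\mathcal S\subseteq 2^S$ is: (S.0) a $0$-scaffold if $S=\{x\}$, $\mathcal S=\{S\}$; then $\mathrm{ht}(S)=\mathrm{ht}_S(x)=0$ and $\mathrm{cor}\,S=x$. (S.1) an $\alpha$-scaffold if there are $x\in S$, pairwise disjoint open sets $U_n\subseteq X$, and $\alpha_n$-scaffolds $(S_n,\mathcal S_n)$ $(n\in\omega)$ with $(\alpha_n)$ nondecreasing, $\alpha=\min\{\beta:\beta>\alpha_n\text{ for all }n\}$, $\mathrm{cor}\,S_n\to x$, $\overline{S_n}\subseteq U_n$, $x\notin\overline{U_n}$, $S=\{x\}\cup\bigcup_nS_n$, $\mathcal S=\{S\}\cup\bigcup_n\mathcal S_n$; then $\mathrm{ht}(S)=\mathrm{ht}_S(x)=\alpha$, $\mathrm{ht}_S(x')=\mathrm{ht}_{S_n}(x')$ for $x'\in S_n$, and $\mathrm{cor}\,S=x$.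 A set $S\subseteq X$ is an $\alpha$-scaffold if such a stratification $\mathcal S$ exists; $\mathrm{cor}\,S$ and $\mathrm{ht}_S$ do not depend on its choice. $S_{[0]}=\{s\in S:\mathrm{ht}_S(s)=0\}$. $[\mathcal A]^\omega$ denotes the set of countably infinite subsets of $\mathcal A$. *)

theory Defs
  imports "HOL-Analysis.Analysis"
begin

text \<open>Ordinal heights are taken in an arbitrary well-ordered type 'o; height 0 is
the least element of 'o.\<close>

definition ord_zero :: "'o::wellorder" where
  "ord_zero = (LEAST b. True)"

text \<open>scaffold S c ht \<alpha>: S is an \<alpha>-scaffold (in the ambient topological space 'a)
with core c and height function ht (relevant on S only), witnessed by a stratification.\<close>

inductive scaffold :: "'a::topological_space set \<Rightarrow> 'a \<Rightarrow> ('a \<Rightarrow> 'o::wellorder) \<Rightarrow> 'o \<Rightarrow> bool"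
where
  base: "ht x = ord_zero \<Longrightarrow> scaffold {x} x ht ord_zero"
| step: "\<lbrakk> \<forall>n. scaffold (Sn n) (cn n) (hn n) (an n);
          mono an;
          \<exists>b. \<forall>n. an n < b;
          \<alpha> = (LEAST b. \<forall>n. an n < b);
          \<forall>n. open (U n);
          \<forall>m n. m \<noteq> n \<longrightarrow> U m \<inter> U n = {};
          cn \<longlonglongrightarrow> x;
          \<forall>n. closure (Sn n) \<subseteq> U n;
          \<forall>n. x \<notin> closure (U n);
          S = insert x (\<Union>n. Sn n);
          ht x = \<alpha>;
          \<forall>n. \<forall>y\<in>Sn n. ht y = hn n y \<rbrakk>
        \<Longrightarrow> scaffold S x ht \<alpha>"

definition level0 :: "'a set \<Rightarrow> ('a \<Rightarrow> 'o::wellorder) \<Rightarrow> 'a set" where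
  "level0 S ht = {s\<in>S. ht s = ord_zero}"

end

theory Submission
  imports Defs
begin

text \<open>In the successor step every core cor S_n satisfies
the dichotomy for the height-0 points of S_n, hence for the larger set of height-0 points of S,
and the dichotomy passes to the limit of the cores: if one member of the cover works for
infinitely many cores it works for cor S; if infinitely many cores are handled by members of the
cover, each member handling only finitely many, these members form a single infinite witnessing
family; otherwise infinitely many cores have witnessing families and their union is one.\<close>

definition forcing_family :: "'a::topological_space \<Rightarrow> 'a set \<Rightarrow> 'a set set \<Rightarrow> 'a set set set \<Rightarrow> bool"
  where "forcing_family c L \<A> \<A>S \<longleftrightarrow>
    countable \<A>S \<and> (\<forall>\<B>\<in>\<A>S. \<B> \<subseteq> \<A> \<and> countable \<B> \<and> infinite \<B>) \<and>
    (\<forall>\<A>'. \<A>' \<subseteq> \<A> \<longrightarrow> (\<forall>\<B>\<in>\<A>S. infinite (\<A>' \<inter> \<B>)) \<longrightarrow> c \<in> closure (\<Union>B\<in>\<A>'. L \<inter> B))"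

definition closure_dichotomy :: "'a::topological_space \<Rightarrow> 'a set \<Rightarrow> 'a set set \<Rightarrow> bool"
  where "closure_dichotomy c L \<A> \<longleftrightarrow>
    (\<exists>A\<in>\<A>. c \<in> closure (A \<inter> L)) \<or> (\<exists>\<A>S. forcing_family c L \<A> \<A>S)"

lemma forcing_family_mono:
  assumes "forcing_family c L \<A> \<A>S" "L \<subseteq> L'"
  shows "forcing_family c L' \<A> \<A>S"
  unfolding forcing_family_def
proof (intro conjI allI impI)
  fix \<A>'
  assume "\<A>' \<subseteq> \<A>" "\<forall>\<B>\<in>\<A>S. infinite (\<A>' \<inter> \<B>)"
  with assms(1) have "c \<in> closure (\<Union>B\<in>\<A>'. L \<inter> B)"
    unfolding forcing_family_def by blast
  moreover have "closure (\<Union>B\<in>\<A>'. L \<inter> B) \<subseteq> closure (\<Union>B\<in>\<A>'. L' \<inter> B)"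
    using assms(2) by (intro closure_mono) blast
  ultimately show "c \<in> closure (\<Union>B\<in>\<A>'. L' \<inter> B)"
    by (rule subsetD[rotated])
qed (use assms(1) in \<open>simp_all add: forcing_family_def\<close>)

lemma closure_dichotomy_mono:
  assumes "closure_dichotomy c L \<A>" "L \<subseteq> L'"
  shows "closure_dichotomy c L' \<A>"
  using assms(1) unfolding closure_dichotomy_def
proof (elim disjE bexE exE)
  fix A
  assume "A \<in> \<A>" "c \<in> closure (A \<inter> L)"
  moreover have "closure (A \<inter> L) \<subseteq> closure (A \<inter> L')"
    using assms(2) by (intro closure_mono) blast
  ultimately show "(\<exists>A\<in>\<A>. c \<in> closure (A \<inter> L')) \<or> (\<exists>\<A>S. forcing_family c L' \<A> \<A>S)"
    by blast
next
  fix \<A>S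
  assume "forcing_family c L \<A> \<A>S"
  then show "(\<exists>A\<in>\<A>. c \<in> closure (A \<inter> L')) \<or> (\<exists>\<A>S. forcing_family c L' \<A> \<A>S)"
    using forcing_family_mono[OF _ assms(2)] by blast
qed

lemma LIMSEQ_in_closed_infinitely_often:
  fixes f :: "nat \<Rightarrow> 'a::topological_space"
  assumes "f \<longlonglongrightarrow> l" "closed F" "infinite M" "\<And>n. n \<in> M \<Longrightarrow> f n \<in> F"
  shows "l \<in> F"
proof (rule ccontr)
  assume "l \<notin> F"
  with assms(1,2) have "eventually (\<lambda>n. f n \<notin> F) sequentially"
    by (simp add: topological_tendstoD open_Compl flip: Compl_iff)
  then obtain N where "\<forall>n\<ge>N. f n \<notin> F"
    by (auto simp: eventually_sequentially)
  moreover obtain n where "n \<in> M" "n \<ge> N"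
    using assms(3) infinite_nat_iff_unbounded_le by blast
  ultimately show False
    using assms(4) by blast
qed

lemma LIMSEQ_in_closure_infinitely_often:
  fixes f :: "nat \<Rightarrow> 'a::topological_space"
  assumes "f \<longlonglongrightarrow> l" "infinite M" "\<And>n. n \<in> M \<Longrightarrow> f n \<in> closure V"
  shows "l \<in> closure V"
  using LIMSEQ_in_closed_infinitely_often[OF assms(1) closed_closure assms(2)] assms(3) .

lemma forcing_family_UN_limit:
  assumes "f \<longlonglongrightarrow> l" "infinite M" "\<And>n. n \<in> M \<Longrightarrow> forcing_family (f n) L \<A> (\<A>S n)"
  shows "forcing_family l L \<A> (\<Union>n\<in>M. \<A>S n)"
  unfolding forcing_family_def
proof (intro conjI allI impI)
  show "countable (\<Union>n\<in>M. \<A>S n)"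
    using assms(3) by (intro countable_UN) (auto simp: forcing_family_def)
  show "\<forall>\<B>\<in>(\<Union>n\<in>M. \<A>S n). \<B> \<subseteq> \<A> \<and> countable \<B> \<and> infinite \<B>"
    using assms(3) by (auto simp: forcing_family_def)
next
  fix \<A>'
  assume "\<A>' \<subseteq> \<A>" "\<forall>\<B>\<in>(\<Union>n\<in>M. \<A>S n). infinite (\<A>' \<inter> \<B>)"
  then have "f n \<in> closure (\<Union>B\<in>\<A>'. L \<inter> B)" if "n \<in> M" for n
    using assms(3)[OF that] unfolding forcing_family_def using that by blast
  then show "l \<in> closure (\<Union>B\<in>\<A>'. L \<inter> B)"
    using LIMSEQ_in_closure_infinitely_often[OF assms(1,2)] by blast
qed

lemma forcing_family_image_limit:
  assumes "f \<longlonglongrightarrow> l" "infinite M"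
    and members: "\<And>n. n \<in> M \<Longrightarrow> A n \<in> \<A> \<and> f n \<in> closure (A n \<inter> L)"
    and finite_fibres: "\<And>B. finite {n\<in>M. A n = B}"
  shows "forcing_family l L \<A> {A ` M}"
proof -
  have "infinite (A ` M)"
  proof
    assume "finite (A ` M)"
    then obtain B where "infinite (A -` {B} \<inter> M)"
      using assms(2) by (rule inf_img_fin_domE')
    moreover have "A -` {B} \<inter> M = {n\<in>M. A n = B}"
      by blast
    ultimately show False
      using finite_fibres by simp
  qed
  moreover have "A ` M \<subseteq> \<A>"
    using members by blast
  moreover have "countable (A ` M)"
    by (intro countable_image countableI_type)
  moreover have "l \<in> closure (\<Union>B\<in>\<A>'. L \<inter> B)" if "infinite (\<A>' \<inter> A ` M)" for \<A>'
  proof (rule LIMSEQ_in_closure_infinitely_often[OF assms(1)])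
    have "A ` {n\<in>M. A n \<in> \<A>'} = \<A>' \<inter> A ` M"
      by blast
    with that show "infinite {n\<in>M. A n \<in> \<A>'}"
      by (metis finite_imageI)
  next
    fix n
    assume n: "n \<in> {n\<in>M. A n \<in> \<A>'}"
    then have "closure (A n \<inter> L) \<subseteq> closure (\<Union>B\<in>\<A>'. L \<inter> B)"
      by (intro closure_mono) blast
    with n members show "f n \<in> closure (\<Union>B\<in>\<A>'. L \<inter> B)"
      by blast
  qed
  ultimately show ?thesis
    unfolding forcing_family_def by simp
qed

lemma closure_dichotomy_limit:
  assumes lim: "f \<longlonglongrightarrow> l" and dich: "\<And>n. closure_dichotomy (f n) L \<A>"
  shows "closure_dichotomy l L \<A>"
proof -
  define M where "M = {n. \<exists>B\<in>\<A>. f n \<in> closure (B \<inter> L)}"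
  show ?thesis
  proof (cases "infinite M")
    case True
    obtain A where A: "\<And>n. n \<in> M \<Longrightarrow> A n \<in> \<A> \<and> f n \<in> closure (A n \<inter> L)"
      using bchoice[of M "\<lambda>n B. B \<in> \<A> \<and> f n \<in> closure (B \<inter> L)"] unfolding M_def by blast
    show ?thesis
    proof (cases "\<exists>B. infinite {n\<in>M. A n = B}")
      case True
      then obtain B where B: "infinite {n\<in>M. A n = B}"
        by blast
      then obtain n where "n \<in> M" "A n = B"
        using not_finite_existsD by blast
      moreover have "l \<in> closure (B \<inter> L)"
        by (rule LIMSEQ_in_closure_infinitely_often[OF lim B]) (use A in auto)
      ultimately show ?thesis
        using A unfolding closure_dichotomy_def by blast
    next
      case False
      then show ?thesis
        using forcing_family_image_limit[OF lim \<open>infinite M\<close> A]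
        unfolding closure_dichotomy_def by blast
    qed
  next
    case False
    then have "infinite (- M)"
      using finite_compl by blast
    obtain \<A>S where "\<And>n. n \<in> - M \<Longrightarrow> forcing_family (f n) L \<A> (\<A>S n)"
      using bchoice[of "- M" "\<lambda>n \<A>S. forcing_family (f n) L \<A> \<A>S"] dich
      unfolding M_def closure_dichotomy_def by blast
    then show ?thesis
      using forcing_family_UN_limit[OF lim \<open>infinite (- M)\<close>]
      unfolding closure_dichotomy_def by blast
  qed
qed

lemma scaffold_closure_dichotomy:
  assumes "scaffold S c ht \<alpha>" "level0 S ht \<subseteq> \<Union>\<A>"
  shows "closure_dichotomy c (level0 S ht) \<A>"
  using assms
proof (induction arbitrary: \<A> rule: scaffold.induct)
  case (base ht x)
  then obtain A where "A \<in> \<A>" "x \<in> A"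
    by (auto simp: level0_def)
  with base have "x \<in> A \<inter> level0 {x} ht"
    by (simp add: level0_def)
  then have "x \<in> closure (A \<inter> level0 {x} ht)"
    using closure_subset by blast
  with \<open>A \<in> \<A>\<close> show ?case
    unfolding closure_dichotomy_def by blast
next
  case (step Sn cn hn an \<alpha> U x S ht)
  have sub: "level0 (Sn n) (hn n) \<subseteq> level0 S ht" for n
    using step.hyps(9,11) by (auto simp: level0_def)
  have "closure_dichotomy (cn n) (level0 S ht) \<A>" for n
    using step.IH sub step.prems by (blast intro: closure_dichotomy_mono)
  then show ?case
    using closure_dichotomy_limit[OF step.hyps(6)] by blast
qed

theorem lemma13:
  fixes S :: "'a::topological_space set" and c :: 'a
    and ht :: "'a \<Rightarrow> 'o::wellorder" and \<alpha> :: 'o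
    and \<A> :: "'a set set"
  assumes "scaffold S c ht \<alpha>"
    and "level0 S ht \<subseteq> \<Union>\<A>"
  shows "(\<exists>A\<in>\<A>. c \<in> closure (A \<inter> level0 S ht))
      \<or> (\<exists>\<A>S. countable \<A>S \<and> (\<forall>\<B>\<in>\<A>S. \<B> \<subseteq> \<A> \<and> countable \<B> \<and> infinite \<B>)
            \<and> (\<forall>\<A>'. \<A>' \<subseteq> \<A> \<longrightarrow> (\<forall>\<B>\<in>\<A>S. infinite (\<A>' \<inter> \<B>))
                 \<longrightarrow> c \<in> closure (\<Union>B\<in>\<A>'. level0 S ht \<inter> B)))"
  using scaffold_closure_dichotomy[OF assms]
  unfolding closure_dichotomy_def forcing_family_def .

end
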